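(* Let $n\geq k\geq 4$ with $k\equiv 0\pmod 4$, and let $c\geq1$. Then there exists a diagonal $\mathrm{MS}^0_\Gamma(n,n;k,k;c)$ for every abelian group $\Gamma\in\mathcal G$ of order $nkc$.
   Context: Let $(\Gamma,+)$ be an abelian group. A partially filled array is an array in which some cells may be empty. A zero-sum magic partially filled array set $\mathrm{MS}^0_\Gamma(n,n;k,k;c)$ is a set of $c$ partially filled $n\times n$ arrays with entries in $\Gamma$ such that every element of $\Gamma$ appears exactly once in exactly one of the arrays, every array has exactly $k$ filled cells in each row and each column, and in every array the entries of each row and each column sum to $0_\Gamma$. For an $n\times n$ partially filled array, cell $(i,j)$ belongs to the diagonal $D_r$ if $j-i\equiv r\pmod n$; the array is $k$-diagonal if its nonempty cells are exactly those of $k$ consecutive diagonals (indices mod $n$); the set is diagonal if every member is $k$-diagonal. $\mathcal G$ is the set of all finite abelian groups that either have odd order or contain more than one element of order $2$. *)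

theory Defs
  imports Main
begin

text \<open>A family of c partially filled n x n arrays over an abelian group 'a is
  modelled as A :: nat => nat => nat => 'a option, where A t i j is the content
  of cell (i,j) (0-based, i,j < n) of array t (t < c); None = empty cell.\<close>

definition entry :: "'a::zero option \<Rightarrow> 'a" where
  "entry x = (case x of None \<Rightarrow> 0 | Some y \<Rightarrow> y)"

text \<open>Cell (i,j) lies on diagonal D_r iff j - i = r (mod n).\<close>
definition k_diagonal :: "nat \<Rightarrow> nat \<Rightarrow> (nat \<Rightarrow> nat \<Rightarrow> 'a option) \<Rightarrow> bool" where
  "k_diagonal n k B \<longleftrightarrow> (\<exists>s<n. \<forall>i<n. \<forall>j<n.
      (B i j \<noteq> None \<longleftrightarrow> (int j - int i - int s) mod int n < int k))"

definition zero_sum_magic_set ::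
  "nat \<Rightarrow> nat \<Rightarrow> nat \<Rightarrow> (nat \<Rightarrow> nat \<Rightarrow> nat \<Rightarrow> 'a::ab_group_add option) \<Rightarrow> bool" where
  "zero_sum_magic_set n k c A \<longleftrightarrow>
     (\<forall>g::'a. \<exists>!p. (case p of (t, i, j) \<Rightarrow> t < c \<and> i < n \<and> j < n \<and> A t i j = Some g)) \<and>
     (\<forall>t<c. \<forall>i<n. card {j. j < n \<and> A t i j \<noteq> None} = k) \<and>
     (\<forall>t<c. \<forall>j<n. card {i. i < n \<and> A t i j \<noteq> None} = k) \<and>
     (\<forall>t<c. \<forall>i<n. (\<Sum>j<n. entry (A t i j)) = 0) \<and>
     (\<forall>t<c. \<forall>j<n. (\<Sum>i<n. entry (A t i j)) = 0)"

definition diagonal_set :: "nat \<Rightarrow> nat \<Rightarrow> nat \<Rightarrow> (nat \<Rightarrow> nat \<Rightarrow> nat \<Rightarrow> 'a option) \<Rightarrow> bool" where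
  "diagonal_set n k c A \<longleftrightarrow> (\<forall>t<c. k_diagonal n k (A t))"

definition in_class_G :: "'a::{ab_group_add,finite} itself \<Rightarrow> bool" where
  "in_class_G _ \<longleftrightarrow> odd (card (UNIV :: 'a set)) \<or> card {x::'a. x \<noteq> 0 \<and> x + x = 0} > 1"

end

theory Submission
  imports Defs
begin

text \<open>
  Array t is made of m blocks of four consecutive diagonals. In block \<open>\<beta>\<close>, row i carries
  \<open>y(i), P - y(i+1), -P - D - y(i), y(i+1) + D\<close> for a sequence y indexed by the rows mod n. These
  cancel along the row; in a column the block occupies rows \<open>r, r-1, r-2, r-3\<close> with entries
  \<open>y(r), P - y(r), -P - D - y(r-2), y(r-2) + D\<close>, which cancel as well. The block uses exactly the
  quadruples \<open>{y, y + D, P - y, -P - D - y}\<close> of its sequence, so it suffices to partition the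
  group into \<open>|\<Gamma>|/4\<close> such quadruples.

  Let D be an involution, P and \<open>P - D\<close> non-doubles, and M a subgroup of \<open>2\<Gamma>\<close> containing \<open>2P\<close>
  but not D. With \<open>L = M \<union> (D + M)\<close>, the sets \<open>(y + L) \<union> (P - y + L)\<close> partition \<open>\<Gamma>\<close> into pieces
  of size \<open>4|M|\<close>, each covered by the quadruples of the elements of \<open>y + M\<close>. In a group of the
  class G of even order such data exist: if some involution P is not a double, \<open>M = {0}\<close> works;
  otherwise take any non-double P and the cyclic group \<open>M = \<langle>2P\<rangle>\<close>, which contains only one of
  the (at least two) involutions.
\<close>

section \<open>Involutions among the multiples of an element\<close>

fun mult_nat :: "nat \<Rightarrow> 'a::monoid_add \<Rightarrow> 'a" where
  "mult_nat 0 g = 0"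
| "mult_nat (Suc k) g = g + mult_nat k g"

lemma mult_nat_add: "mult_nat (a + b) g = mult_nat a g + mult_nat b g"
  by (induction a) (simp_all add: add.assoc)

lemma mult_nat_mult: "mult_nat (a * b) g = mult_nat a (mult_nat b g)"
  by (induction a) (simp_all add: mult_nat_add)

lemma mult_nat_zero [simp]: "mult_nat k 0 = 0"
  by (induction k) simp_all

lemma mult_nat_double: "mult_nat k (g + g) = mult_nat k g + mult_nat k (g::'a::comm_monoid_add)"
  by (induction k) (simp_all add: ac_simps)

lemma ex_mult_nat_eq_0:
  fixes g :: "'a::{group_add,finite}"
  shows "\<exists>N>0. mult_nat N g = 0"
proof -
  have "\<not> inj (\<lambda>k. mult_nat k g)"
    using finite_UNIV finite_imageD infinite_UNIV_nat
    by (metis finite_subset subset_UNIV)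
  then obtain a b where ab: "a < b" "mult_nat a g = mult_nat b g"
    unfolding inj_def by (metis linorder_neqE_nat)
  have "mult_nat (b - a) g + mult_nat a g = mult_nat a g"
    using ab by (metis le_add_diff_inverse2 less_imp_le mult_nat_add)
  then have "mult_nat (b - a) g = 0"
    by (metis add.left_neutral add_right_cancel)
  then show ?thesis using ab(1) by (intro exI[of _ "b - a"]) simp
qed

lemma double_mod_eq_modulus:
  fixes N i :: nat
  assumes "N dvd 2 * i" "\<not> N dvd i"
  shows "2 * (i mod N) = N"
proof -
  have "N dvd 2 * (i mod N)" using assms(1) by (metis mod_mod_trivial mod_mult_right_eq dvd_eq_mod_eq_0)
  then obtain q where q: "2 * (i mod N) = N * q" by blast
  have "N > 0" using assms by (cases "N = 0") auto
  then have "0 < i mod N" "i mod N < N" using assms(2) by (auto simp: dvd_eq_mod_eq_0 gr0I)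
  then have "N * q < N * 2" "N * q \<noteq> 0" using q by linarith+
  then have "q = 1" by simp
  then show ?thesis using q by simp
qed

lemma mult_nat_order2_unique:
  fixes g :: "'a::{ab_group_add,finite}"
  assumes "mult_nat i g + mult_nat i g = 0" "mult_nat i g \<noteq> 0"
    and "mult_nat j g + mult_nat j g = 0" "mult_nat j g \<noteq> 0"
  shows "mult_nat i g = mult_nat j g"
proof -
  define N where "N = (LEAST N. 0 < N \<and> mult_nat N g = 0)"
  have N: "0 < N" "mult_nat N g = 0"
    unfolding N_def using LeastI_ex[OF ex_mult_nat_eq_0[of g]] by simp_all
  have mod_N: "mult_nat k g = mult_nat (k mod N) g" for k
  proof -
    have "mult_nat k g = mult_nat (k mod N) g + mult_nat (k div N) (mult_nat N g)"
      by (metis mod_div_mult_eq mult_nat_add mult_nat_mult)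
    then show ?thesis using N by simp
  qed
  have zero_iff: "mult_nat k g = 0 \<longleftrightarrow> N dvd k" for k
  proof
    assume "mult_nat k g = 0"
    then have "\<not> 0 < k mod N"
      using mod_N[of k] not_less_Least[of "k mod N" "\<lambda>N. 0 < N \<and> mult_nat N g = 0"] N(1)
      unfolding N_def by auto
    then show "N dvd k" by (simp add: dvd_eq_mod_eq_0)
  qed (metis mod_N dvd_eq_mod_eq_0 mult_nat.simps(1))
  have "mult_nat (2 * i) g = 0" "mult_nat (2 * j) g = 0"
    using assms(1,3) by (simp_all add: mult_2 mult_nat_add)
  then have "2 * (i mod N) = N" "2 * (j mod N) = N"
    using assms(2,4) by (simp_all add: double_mod_eq_modulus zero_iff)
  then show ?thesis by (metis mod_N mult_cancel_left zero_neq_numeral)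
qed

section \<open>Partitioning the group into quadruples\<close>

definition quad :: "'a::ab_group_add \<Rightarrow> 'a \<Rightarrow> 'a \<Rightarrow> 'a list" where
  "quad D P x = [x, x + D, P - x, - P - D - x]"

definition quad_cover :: "'a::ab_group_add \<Rightarrow> 'a \<Rightarrow> 'a set \<Rightarrow> 'a set \<Rightarrow> bool" where
  "quad_cover D P X S \<longleftrightarrow> finite X \<and> 4 * card X \<le> card S \<and> S \<subseteq> (\<Union>x\<in>X. set (quad D P x))"

lemma quad_cover_empty: "quad_cover D P {} {}"
  by (simp add: quad_cover_def)

lemma quad_cover_Un:
  assumes "quad_cover D P X S" "quad_cover D P Y T" "S \<inter> T = {}" "finite S" "finite T"
  shows "quad_cover D P (X \<union> Y) (S \<union> T)"
proof -
  have "card (X \<union> Y) \<le> card X + card Y" by (rule card_Un_le)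
  then show ?thesis
    using assms by (auto simp: quad_cover_def card_Un_disjoint)
qed

lemma mem_image_add_iff: "x \<in> (+) a ` S \<longleftrightarrow> x - a \<in> (S :: 'a::ab_group_add set)"
  by (auto intro: image_eqI[of _ _ "x - a"])

lemma neg_mem_if_add_closed:
  fixes M :: "'a::{group_add,finite} set"
  assumes "0 \<in> M" "\<And>x y. x \<in> M \<Longrightarrow> y \<in> M \<Longrightarrow> x + y \<in> M" "x \<in> M"
  shows "- x \<in> M"
proof -
  have "(+) x ` M \<subseteq> M" using assms(2,3) by blast
  moreover have "inj_on ((+) x) M" by (simp add: inj_on_def)
  ultimately have "(+) x ` M = M" using endo_inj_surj[OF finite] by blast
  then have "0 \<in> (+) x ` M" using assms(1) by simp
  then obtain y where "0 = x + y" "y \<in> M" by (rule imageE)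
  then show ?thesis by (simp add: add.inverse_unique)
qed

lemma not_double_diff:
  fixes a b :: "'a::ab_group_add"
  assumes "a \<notin> range (\<lambda>y. y + y)" "b \<in> range (\<lambda>y. y + y)"
  shows "a - b \<notin> range (\<lambda>y. y + y)"
proof
  assume "a - b \<in> range (\<lambda>y. y + y)"
  then obtain g where g: "a - b = g + g" by (rule rangeE)
  obtain f where f: "b = f + f" using assms(2) by (rule rangeE)
  have "a = (g + g) + b" using g by (metis diff_add_cancel)
  also have "\<dots> = (g + f) + (g + f)" unfolding f by (simp add: algebra_simps)
  finally have "a \<in> range (\<lambda>y. y + y)" by (rule range_eqI)
  then show False using assms(1) by contradiction
qed

locale quadruple_system =
  fixes D P :: "'a::{ab_group_add,finite}" and M :: "'a set"
  assumes zero_mem: "0 \<in> M" and add_mem: "\<And>x y. x \<in> M \<Longrightarrow> y \<in> M \<Longrightarrow> x + y \<in> M"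
    and D_order2: "D + D = 0" and D_not_mem: "D \<notin> M" and double_P_mem: "P + P \<in> M"
    and mem_doubles: "M \<subseteq> range (\<lambda>y. y + y)"
    and P_not_double: "P \<notin> range (\<lambda>y. y + y)" and P_diff_D_not_double: "P - D \<notin> range (\<lambda>y. y + y)"
begin

lemma neg_mem: "x \<in> M \<Longrightarrow> - x \<in> M"
  using neg_mem_if_add_closed zero_mem add_mem by blast

lemma diff_mem: "x \<in> M \<Longrightarrow> y \<in> M \<Longrightarrow> x - y \<in> M"
  using add_mem neg_mem by (metis diff_conv_add_uminus)

definition L :: "'a set" where "L = M \<union> (+) D ` M"

lemma mem_L_iff: "x \<in> L \<longleftrightarrow> x \<in> M \<or> x - D \<in> M"
  by (simp add: L_def mem_image_add_iff)

lemma L_diff_mem: assumes "x \<in> L" "y \<in> L" shows "x - y \<in> L"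
  using assms unfolding mem_L_iff
proof (elim disjE)
  assume "x \<in> M" "y - D \<in> M"
  have "x - y - D = x - (y - D) - (D + D)" by (simp add: algebra_simps)
  then have "x - y - D = x - (y - D)" using D_order2 by simp
  then have "x - y - D \<in> M" using diff_mem[OF \<open>x \<in> M\<close> \<open>y - D \<in> M\<close>] by (simp only:)
  then show "x - y \<in> M \<or> x - y - D \<in> M" ..
next
  assume "x - D \<in> M" "y \<in> M"
  have "x - y - D = x - D - y" by (simp add: algebra_simps)
  then have "x - y - D \<in> M" using diff_mem[OF \<open>x - D \<in> M\<close> \<open>y \<in> M\<close>] by (simp only:)
  then show "x - y \<in> M \<or> x - y - D \<in> M" ..
next
  assume "x - D \<in> M" "y - D \<in> M"
  have "x - y = x - D - (y - D)" by (simp add: algebra_simps)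
  then have "x - y \<in> M" using diff_mem[OF \<open>x - D \<in> M\<close> \<open>y - D \<in> M\<close>] by (simp only:)
  then show "x - y \<in> M \<or> x - y - D \<in> M" ..
qed (use diff_mem in blast)

lemma zero_mem_L: "0 \<in> L"
  by (simp add: L_def zero_mem)

lemma L_neg_mem: "x \<in> L \<Longrightarrow> - x \<in> L"
  using L_diff_mem[OF zero_mem_L, of x] by simp

lemma L_add_mem: "x \<in> L \<Longrightarrow> y \<in> L \<Longrightarrow> x + y \<in> L"
  using L_diff_mem[of x "- y"] L_neg_mem[of y] by simp

lemma card_L: "card L = 2 * card M"
proof -
  have "M \<inter> (+) D ` M = {}"
    unfolding disjoint_iff mem_image_add_iff
  proof (intro allI impI notI)
    fix x assume "x \<in> M" "x - D \<in> M"
    then have "x - (x - D) \<in> M" by (rule diff_mem)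
    then show False using D_not_mem by simp
  qed
  then show ?thesis unfolding L_def by (simp add: card_Un_disjoint card_image)
qed

lemma coset_eq: assumes "a - b \<in> L" shows "(+) a ` L = (+) b ` L"
proof (rule set_eqI)
  fix x
  have "x - b = (x - a) + (a - b)" "x - a = (x - b) - (a - b)" by simp_all
  then show "x \<in> (+) a ` L \<longleftrightarrow> x \<in> (+) b ` L"
    unfolding mem_image_add_iff using assms L_add_mem L_diff_mem by metis
qed

definition block :: "'a \<Rightarrow> 'a set" where
  "block y = (+) y ` L \<union> (+) (P - y) ` L"

lemma block_self: "y \<in> block y"
  unfolding block_def mem_image_add_iff using zero_mem_L by simp

lemma block_eq: assumes "z \<in> block y" shows "block z = block y"
  using assms unfolding block_def Un_iff mem_image_add_iff
proof (elim disjE)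
  assume "z - y \<in> L"
  moreover have "P - z - (P - y) = - (z - y)" by simp
  ultimately show "(+) z ` L \<union> (+) (P - z) ` L = (+) y ` L \<union> (+) (P - y) ` L"
    using coset_eq L_neg_mem by metis
next
  assume "z - (P - y) \<in> L"
  moreover have "P - z - y = - (z - (P - y))" by simp
  ultimately show "(+) z ` L \<union> (+) (P - z) ` L = (+) y ` L \<union> (+) (P - y) ` L"
    using coset_eq L_neg_mem by (metis Un_commute)
qed

lemma card_block: "card (block y) = 4 * card M"
proof -
  have "(+) y ` L \<inter> (+) (P - y) ` L = {}"
    unfolding disjoint_iff mem_image_add_iff
  proof (intro allI impI notI)
    fix x assume "x - y \<in> L" "x - (P - y) \<in> L"
    then have "(x - (P - y)) - (x - y) \<in> L" by (rule L_diff_mem[rotated])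
    moreover have "(x - (P - y)) - (x - y) = - (P - (y + y))" by (simp add: algebra_simps)
    ultimately have "P - (y + y) \<in> L" using L_neg_mem by (metis minus_minus)
    moreover have "P - (y + y) \<notin> range (\<lambda>y. y + y)" "P - D - (y + y) \<notin> range (\<lambda>y. y + y)"
      using P_not_double P_diff_D_not_double by (simp_all add: not_double_diff)
    ultimately show False
      using mem_doubles unfolding mem_L_iff by (auto simp: diff_right_commute)
  qed
  then show ?thesis unfolding block_def by (simp add: card_Un_disjoint card_image card_L)
qed

lemma quad_cover_block: "quad_cover D P ((+) y ` M) (block y)"
  unfolding quad_cover_def
proof (intro conjI subsetI)
  show "4 * card ((+) y ` M) \<le> card (block y)" by (simp add: card_block card_image)
next
  fix x assume "x \<in> block y"
  then consider "x - y \<in> M" | "x - y - D \<in> M" | "x + y - P \<in> M" | "x + y - P - D \<in> M"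
    unfolding block_def Un_iff mem_image_add_iff mem_L_iff by (auto simp: diff_diff_eq2)
  then have "\<exists>z\<in>(+) y ` M. x \<in> set (quad D P z)"
  proof cases
    case 1
    then show ?thesis by (intro bexI[of _ x]) (simp_all add: quad_def mem_image_add_iff)
  next
    case 2
    then show ?thesis
      by (intro bexI[of _ "x - D"]) (simp_all add: quad_def mem_image_add_iff diff_right_commute)
  next
    case 3
    have "P - x - y \<in> M" using neg_mem[OF 3] by (simp add: diff_diff_eq)
    then show ?thesis by (intro bexI[of _ "P - x"]) (simp_all add: quad_def mem_image_add_iff)
  next
    case 4
    have "- P - D - x - y = - (x + y - P - D) - (P + P) - (D + D)" by (simp add: algebra_simps)
    then have "- P - D - x - y = - (x + y - P - D) - (P + P)" using D_order2 by simp
    then have "- P - D - x - y \<in> M" using diff_mem[OF neg_mem[OF 4] double_P_mem] by (simp only:)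
    then show ?thesis by (intro bexI[of _ "- P - D - x"]) (simp_all add: quad_def mem_image_add_iff)
  qed
  then show "x \<in> (\<Union>z\<in>(+) y ` M. set (quad D P z))" by blast
qed simp

lemma quad_cover_closed: "(\<And>y. y \<in> S \<Longrightarrow> block y \<subseteq> S) \<Longrightarrow> \<exists>X. quad_cover D P X S"
proof (induction "card S" arbitrary: S rule: less_induct)
  case less
  show ?case
  proof (cases "S = {}")
    case True
    then show ?thesis using quad_cover_empty by blast
  next
    case False
    then obtain y where y: "y \<in> S" by blast
    have closed: "block z \<subseteq> S - block y" if z: "z \<in> S" "z \<notin> block y" for z
    proof -
      have "block z \<inter> block y = {}"
      proof (rule ccontr)
        assume "block z \<inter> block y \<noteq> {}"
        then obtain w where "w \<in> block z" "w \<in> block y" by blast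
        then have "block z = block y" using block_eq by metis
        then show False using z(2) block_self by blast
      qed
      then show ?thesis using less.prems z(1) by blast
    qed
    have "card (S - block y) < card S"
      using y block_self by (intro psubset_card_mono) auto
    then obtain X where "quad_cover D P X (S - block y)" using less.hyps closed by blast
    then have "quad_cover D P ((+) y ` M \<union> X) (block y \<union> (S - block y))"
      by (intro quad_cover_Un quad_cover_block) auto
    then show ?thesis using less.prems y by (metis Un_Diff_cancel Un_absorb1)
  qed
qed

lemma quad_cover_UNIV: "\<exists>X. quad_cover D P X UNIV"
  by (rule quad_cover_closed) simp

end

lemma quadruple_system_if_involutions_doubles:
  fixes e1 e2 :: "'a::{ab_group_add,finite}"
  assumes e: "e1 \<noteq> e2" "e1 \<noteq> 0" "e2 \<noteq> 0" "e1 + e1 = 0" "e2 + e2 = 0"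
    and doubles: "\<And>x::'a. x + x = 0 \<Longrightarrow> x \<in> range (\<lambda>y. y + y)"
  shows "\<exists>D P M. quadruple_system D P (M :: 'a set)"
proof -
  have "\<not> inj (\<lambda>y::'a. y + y)"
  proof
    assume "inj (\<lambda>y::'a. y + y)"
    then have "e1 = 0" by (rule injD) (simp add: e(4))
    then show False using e(2) by contradiction
  qed
  then obtain P :: 'a where P: "P \<notin> range (\<lambda>y. y + y)"
    using finite_UNIV_surj_inj[OF finite_UNIV] by auto
  define M where "M = range (\<lambda>k. mult_nat k (P + P))"
  have "\<not> (e1 \<in> M \<and> e2 \<in> M)"
  proof
    assume "e1 \<in> M \<and> e2 \<in> M"
    then obtain i j where "e1 = mult_nat i (P + P)" "e2 = mult_nat j (P + P)"
      unfolding M_def by auto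
    then show False using e mult_nat_order2_unique[of i "P + P" j] by simp
  qed
  then have "\<exists>D\<in>{e1, e2}. D \<notin> M" by simp
  then obtain D where "D \<in> {e1, e2}" and D_not_mem: "D \<notin> M" ..
  then have D: "D \<noteq> 0" "D + D = 0" using e by auto
  have "quadruple_system D P M"
  proof
    show "0 \<in> M" "P + P \<in> M"
      unfolding M_def by (rule range_eqI[of _ _ 0], simp, rule range_eqI[of _ _ 1], simp)
    show "x + y \<in> M" if "x \<in> M" "y \<in> M" for x y
      using that unfolding M_def by (auto simp flip: mult_nat_add)
    show "M \<subseteq> range (\<lambda>y. y + y)" unfolding M_def by (auto simp: mult_nat_double)
    show "P - D \<notin> range (\<lambda>y. y + y)" using not_double_diff[OF P doubles[OF D(2)]] .
  qed (use D D_not_mem P in auto)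
  then show ?thesis by blast
qed

lemma quadruple_system_if_involution_not_double:
  fixes P D :: "'a::{ab_group_add,finite}"
  assumes P: "P + P = 0" "P \<notin> range (\<lambda>y. y + y)" and D: "D \<noteq> 0" "D + D = 0" "D \<noteq> P"
  shows "\<exists>E. quadruple_system E P {0}"
proof -
  have zero_double: "0 \<in> range (\<lambda>y::'a. y + y)" by (rule range_eqI[of _ _ 0]) simp
  have trivial: "quadruple_system E P {0}"
    if "E \<noteq> 0" "E + E = 0" "P - E \<notin> range (\<lambda>y. y + y)" for E
    using that P zero_double by unfold_locales auto
  show ?thesis
  proof (cases "P - D \<in> range (\<lambda>y. y + y)")
    case True
    \<comment> \<open>then \<open>D = P - (P - D)\<close> is not a double, and the involution \<open>P - D\<close> does the job\<close>
    have "(P - D) + (P - D) = (P + P) - (D + D)" by (simp add: algebra_simps)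
    then have "P - D \<noteq> 0" "(P - D) + (P - D) = 0" using P D by auto
    moreover have "P - (P - D) \<notin> range (\<lambda>y. y + y)" using not_double_diff[OF P(2) True] .
    ultimately show ?thesis using trivial[of "P - D"] by blast
  next
    case False
    then show ?thesis using trivial[of D] D by blast
  qed
qed

lemma class_G_quadruple_system:
  assumes "in_class_G TYPE('a::{ab_group_add,finite})" "even (card (UNIV :: 'a set))"
  shows "\<exists>D P M. quadruple_system D P (M :: 'a set)"
proof -
  have "card {x::'a. x \<noteq> 0 \<and> x + x = 0} > 1" using assms unfolding in_class_G_def by blast
  then have "\<not> card {x::'a. x \<noteq> 0 \<and> x + x = 0} \<le> Suc 0" by simp
  then obtain e1 e2 :: 'a where e: "e1 \<noteq> e2" "e1 \<noteq> 0" "e2 \<noteq> 0" "e1 + e1 = 0" "e2 + e2 = 0"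
    unfolding card_le_Suc0_iff_eq[OF finite] by blast
  show ?thesis
  proof (cases "\<forall>x::'a. x + x = 0 \<longrightarrow> x \<in> range (\<lambda>y. y + y)")
    case True
    then show ?thesis using quadruple_system_if_involutions_doubles[OF e] by blast
  next
    case False
    then obtain P :: 'a where P: "P + P = 0" "P \<notin> range (\<lambda>y. y + y)" by auto
    obtain D where "D \<in> {e1, e2}" "D \<noteq> P" using e(1) by auto
    then have "D \<noteq> 0" "D + D = 0" "D \<noteq> P" using e by auto
    then show ?thesis using quadruple_system_if_involution_not_double[OF P] by blast
  qed
qed

section \<open>The diagonal arrays\<close>

definition diag_offset :: "nat \<Rightarrow> nat \<Rightarrow> nat \<Rightarrow> nat" where
  "diag_offset n i j = nat ((int j - int i) mod int n)"

lemma diag_offset_lt: "0 < n \<Longrightarrow> diag_offset n i j < n"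
  unfolding diag_offset_def by (simp add: nat_less_iff)

lemma diag_offset_of_row: "d < n \<Longrightarrow> diag_offset n i ((i + d) mod n) = d"
  unfolding diag_offset_def by (simp add: of_nat_mod mod_diff_left_eq)

lemma row_of_diag_offset: "j < n \<Longrightarrow> (i + diag_offset n i j) mod n = j"
proof -
  assume "j < n"
  then have "int ((i + diag_offset n i j) mod n) = int j"
    unfolding diag_offset_def by (simp add: of_nat_mod mod_add_right_eq)
  then show ?thesis by simp
qed

lemma int_mod_add_diff: "d \<le> n \<Longrightarrow> int ((x + n - d) mod n) = (int x - int d) mod int n"
proof -
  assume "d \<le> n"
  then have "int (x + n - d) = (int x - int d) + int n" by simp
  then show ?thesis by (simp add: of_nat_mod)
qed

lemma diag_offset_of_col: "d < n \<Longrightarrow> diag_offset n ((j + n - d) mod n) j = d"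
  unfolding diag_offset_def by (simp add: int_mod_add_diff mod_diff_right_eq)

lemma col_of_diag_offset: "i < n \<Longrightarrow> (j + n - diag_offset n i j) mod n = i"
proof -
  assume "i < n"
  then have "diag_offset n i j \<le> n" using diag_offset_lt[of n i j] by simp
  moreover have "int (diag_offset n i j) = (int j - int i) mod int n"
    using \<open>i < n\<close> by (simp add: diag_offset_def)
  ultimately have "int ((j + n - diag_offset n i j) mod n) = (int j - (int j - int i) mod int n) mod int n"
    using int_mod_add_diff by metis
  also have "\<dots> = int i" using \<open>i < n\<close> by (simp add: mod_diff_right_eq)
  finally show ?thesis by simp
qed

lemma bij_betw_row_offset: "0 < (n::nat) \<Longrightarrow> bij_betw (\<lambda>d. (i + d) mod n) {..<n} {..<n}"
  by (rule bij_betw_byWitness[where f' = "diag_offset n i"])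
    (auto simp: diag_offset_of_row row_of_diag_offset diag_offset_lt)

lemma bij_betw_col_offset: "0 < (n::nat) \<Longrightarrow> bij_betw (\<lambda>d. (j + n - d) mod n) {..<n} {..<n}"
  by (rule bij_betw_byWitness[where f' = "\<lambda>i. diag_offset n i j"])
    (auto simp: diag_offset_of_col col_of_diag_offset diag_offset_lt)

lemma sum_reindex_truncated:
  assumes "bij_betw h {..<n} {..<n::nat}" "K \<le> n"
    and "\<And>d. d < n \<Longrightarrow> F (h d) = (if d < K then f d else 0)"
  shows "(\<Sum>x<n. F x) = (\<Sum>d<K. f d)"
proof -
  have "(\<Sum>x<n. F x) = (\<Sum>d<n. F (h d))"
    using sum.reindex_bij_betw[OF assms(1), of F] by simp
  also have "\<dots> = (\<Sum>d<n. if d < K then f d else 0)"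
    using assms(3) by simp
  also have "\<dots> = sum f {d \<in> {..<n}. d < K}"
    by (rule sum.inter_filter[symmetric]) simp
  also have "{d \<in> {..<n}. d < K} = {..<K}" using assms(2) by auto
  finally show ?thesis .
qed

lemma card_reindex_truncated:
  assumes "bij_betw h {..<n} {..<n::nat}" "K \<le> n" and "\<And>d. d < n \<Longrightarrow> Q (h d) \<longleftrightarrow> d < K"
  shows "card {x. x < n \<and> Q x} = K"
proof -
  have "{x. x < n \<and> Q x} = h ` {..<K}"
  proof (intro set_eqI iffI)
    fix x assume "x \<in> {x. x < n \<and> Q x}"
    then obtain d where "d < n" "x = h d" using assms(1) by (auto simp: bij_betw_def)
    then show "x \<in> h ` {..<K}" using assms(3) \<open>x \<in> _\<close> by auto
  next
    fix x assume "x \<in> h ` {..<K}"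
    then show "x \<in> {x. x < n \<and> Q x}" using assms by (auto simp: bij_betw_def)
  qed
  moreover have "inj_on h {..<K}"
    using assms(1,2) by (auto simp: bij_betw_def intro: inj_on_subset)
  ultimately show ?thesis by (simp add: card_image)
qed

lemma sum_lessThan_blocks:
  "(\<Sum>d<4 * (m::nat). f d) = (\<Sum>\<beta><m. f (4 * \<beta>) + f (4 * \<beta> + 1) + f (4 * \<beta> + 2) + f (4 * \<beta> + 3))"
proof (induction m)
  case (Suc m)
  have "4 * Suc m = Suc (Suc (Suc (Suc (4 * m))))" by simp
  then have "(\<Sum>d<4 * Suc m. f d) = (\<Sum>d<4 * m. f d) + f (4 * m) + f (4 * m + 1) + f (4 * m + 2) + f (4 * m + 3)"
    by (simp add: add.assoc eval_nat_numeral)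
  then show ?case using Suc by (simp add: add.assoc)
qed simp

locale diagonal_construction =
  fixes n m c :: nat and D P :: "'a::{ab_group_add,finite}" and b :: "nat \<Rightarrow> 'a"
  assumes width: "4 * m \<le> n"
    and card_group: "card (UNIV :: 'a set) = n * (4 * m) * c"
    and seeds_cover: "\<And>g. \<exists>w < c * m * n. g \<in> set (quad D P (b w))"
begin

lemma n_pos: "0 < n" and m_pos: "0 < m"
proof -
  have "0 < card (UNIV :: 'a set)" by (rule finite_UNIV_card_ge_0) simp
  then show "0 < n" "0 < m" using card_group by auto
qed

text \<open>The seeds \<open>b w\<close>, \<open>w < cmn\<close>, are dealt out to array t, block \<open>\<beta>\<close> and row z (mod n) via
  \<open>w = (tm + \<beta>)n + z\<close>.\<close>

definition seed :: "nat \<Rightarrow> nat \<Rightarrow> int \<Rightarrow> 'a" where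
  "seed t \<beta> z = b ((t * m + \<beta>) * n + nat (z mod int n))"

lemma seed_mod: "seed t \<beta> (z mod int n + e) = seed t \<beta> (z + e)"
  unfolding seed_def by (simp add: mod_add_left_eq)

lemma seed_col:
  assumes "d \<le> n"
  shows "seed t \<beta> (int ((j + n - d) mod n)) = seed t \<beta> (int j - int d)"
    and "seed t \<beta> (int ((j + n - d) mod n) + e) = seed t \<beta> (int j - int d + e)"
  using seed_mod[of t \<beta> "int j - int d" 0] seed_mod[of t \<beta> "int j - int d" e]
  by (simp_all add: int_mod_add_diff assms)

definition block_value :: "nat \<Rightarrow> nat \<Rightarrow> nat \<Rightarrow> 'a" where
  "block_value t i d = (let y = seed t (d div 4) (int i); y' = seed t (d div 4) (int i + 1)
     in [y, P - y', - P - D - y, y' + D] ! (d mod 4))"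

lemma block_value_block:
  "e < 4 \<Longrightarrow> block_value t i (4 * \<beta> + e) =
    [seed t \<beta> (int i), P - seed t \<beta> (int i + 1), - P - D - seed t \<beta> (int i), seed t \<beta> (int i + 1) + D] ! e"
  unfolding block_value_def Let_def by simp

lemma block_values:
  "block_value t i (4 * \<beta>) = seed t \<beta> (int i)"
  "block_value t i (4 * \<beta> + 1) = P - seed t \<beta> (int i + 1)"
  "block_value t i (4 * \<beta> + 2) = - P - D - seed t \<beta> (int i)"
  "block_value t i (4 * \<beta> + 3) = seed t \<beta> (int i + 1) + D"
  using block_value_block[of 0] block_value_block[of 1] block_value_block[of 2] block_value_block[of 3]
  by simp_all

lemma block_row_sum:
  "block_value t i (4 * \<beta>) + block_value t i (4 * \<beta> + 1)
     + block_value t i (4 * \<beta> + 2) + block_value t i (4 * \<beta> + 3) = 0"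
  unfolding block_values by (simp add: algebra_simps)

lemma block_col_sum:
  assumes "\<beta> < m"
  shows "block_value t ((j + n - 4 * \<beta>) mod n) (4 * \<beta>)
     + block_value t ((j + n - (4 * \<beta> + 1)) mod n) (4 * \<beta> + 1)
     + block_value t ((j + n - (4 * \<beta> + 2)) mod n) (4 * \<beta> + 2)
     + block_value t ((j + n - (4 * \<beta> + 3)) mod n) (4 * \<beta> + 3) = 0"
proof -
  have le: "4 * \<beta> \<le> n" "4 * \<beta> + 1 \<le> n" "4 * \<beta> + 2 \<le> n" "4 * \<beta> + 3 \<le> n"
    using assms width by linarith+
  have "int j - int (4 * \<beta> + 1) + 1 = int j - int (4 * \<beta>)"
    and "int j - int (4 * \<beta> + 3) + 1 = int j - int (4 * \<beta> + 2)" by simp_all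
  then show ?thesis
    unfolding block_values seed_col(1)[OF le(1)] seed_col(2)[OF le(2)] seed_col(1)[OF le(3)]
      seed_col(2)[OF le(4)]
    by (simp add: algebra_simps)
qed

definition diag_array :: "nat \<Rightarrow> nat \<Rightarrow> nat \<Rightarrow> 'a option" where
  "diag_array t i j =
     (if diag_offset n i j < 4 * m then Some (block_value t i (diag_offset n i j)) else None)"

lemma row_sum: "(\<Sum>j<n. entry (diag_array t i j)) = 0"
proof -
  have "(\<Sum>j<n. entry (diag_array t i j)) = (\<Sum>d<4 * m. block_value t i d)"
    using bij_betw_row_offset[OF n_pos, of i] width
    by (rule sum_reindex_truncated) (simp add: diag_array_def diag_offset_of_row entry_def)
  also have "\<dots> = 0" unfolding sum_lessThan_blocks block_row_sum by simp
  finally show ?thesis .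
qed

lemma col_sum: "(\<Sum>i<n. entry (diag_array t i j)) = 0"
proof -
  have "(\<Sum>i<n. entry (diag_array t i j)) = (\<Sum>d<4 * m. block_value t ((j + n - d) mod n) d)"
    using bij_betw_col_offset[OF n_pos, of j] width
    by (rule sum_reindex_truncated) (simp add: diag_array_def diag_offset_of_col entry_def)
  also have "\<dots> = 0" unfolding sum_lessThan_blocks by (intro sum.neutral ballI block_col_sum) simp
  finally show ?thesis .
qed

lemma row_count: "card {j. j < n \<and> diag_array t i j \<noteq> None} = 4 * m"
  using bij_betw_row_offset[OF n_pos, of i] width
  by (rule card_reindex_truncated) (simp add: diag_array_def diag_offset_of_row)

lemma col_count: "card {i. i < n \<and> diag_array t i j \<noteq> None} = 4 * m"
  using bij_betw_col_offset[OF n_pos, of j] width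
  by (rule card_reindex_truncated) (simp add: diag_array_def diag_offset_of_col)

lemma diag_array_k_diagonal: "k_diagonal n (4 * m) (diag_array t)"
  unfolding k_diagonal_def diag_array_def diag_offset_def
  using n_pos by (intro exI[of _ 0]) (simp add: nat_less_iff)

lemma exists_block_value: "\<exists>t<c. \<exists>i<n. \<exists>d<4 * m. block_value t i d = g"
proof -
  obtain w where w: "w < c * m * n" "g \<in> set (quad D P (b w))" using seeds_cover by blast
  define t \<beta> l where "t = w div n div m" and "\<beta> = w div n mod m" and "l = w mod n"
  have t: "t < c" unfolding t_def using w(1)
    by (simp add: less_mult_imp_div_less div_mult2_eq mult.commute mult.left_commute)
  have "\<beta> < m" unfolding \<beta>_def using m_pos by simp
  then have \<beta>: "4 * \<beta> < 4 * m" "4 * \<beta> + 1 < 4 * m" "4 * \<beta> + 2 < 4 * m" "4 * \<beta> + 3 < 4 * m"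
    by linarith+
  have l: "l < n" "(l + n - 1) mod n < n" unfolding l_def using n_pos by simp_all
  have "w = (t * m + \<beta>) * n + l" unfolding t_def \<beta>_def l_def by simp
  then have seed_l: "seed t \<beta> (int l) = b w" and seed_prev: "seed t \<beta> (int ((l + n - 1) mod n) + 1) = b w"
    using seed_col(2)[of 1 t \<beta> l 1] l n_pos by (simp_all add: seed_def)
  from w(2) consider "g = b w" | "g = b w + D" | "g = P - b w" | "g = - P - D - b w"
    by (auto simp: quad_def)
  then have "\<exists>i<n. \<exists>d<4 * m. block_value t i d = g"
  proof cases
    case 1
    then have "block_value t l (4 * \<beta>) = g" using seed_l unfolding block_values by simp
    then show ?thesis using l \<beta> by blast
  next
    case 2
    then have "block_value t ((l + n - 1) mod n) (4 * \<beta> + 3) = g"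
      using seed_prev unfolding block_values by simp
    then show ?thesis using l \<beta> by blast
  next
    case 3
    then have "block_value t ((l + n - 1) mod n) (4 * \<beta> + 1) = g"
      using seed_prev unfolding block_values by simp
    then show ?thesis using l \<beta> by blast
  next
    case 4
    then have "block_value t l (4 * \<beta> + 2) = g" using seed_l unfolding block_values by simp
    then show ?thesis using l \<beta> by blast
  qed
  then show ?thesis using t by blast
qed

lemma exists_cell: "\<exists>t<c. \<exists>i<n. \<exists>j<n. diag_array t i j = Some g"
proof -
  obtain t i d where "t < c" "i < n" "d < 4 * m" "block_value t i d = g"
    using exists_block_value by blast
  moreover have "diag_array t i ((i + d) mod n) = Some g"
    using calculation width by (simp add: diag_array_def diag_offset_of_row)
  ultimately show ?thesis using mod_less_divisor[OF n_pos] by blast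
qed

definition cells :: "(nat \<times> nat \<times> nat) set" where
  "cells = {(t, i, j). t < c \<and> i < n \<and> j < n \<and> diag_array t i j \<noteq> None}"

lemma card_cells: "card cells = card (UNIV :: 'a set)"
proof -
  have "cells = (SIGMA t:{..<c}. SIGMA i:{..<n}. {j. j < n \<and> diag_array t i j \<noteq> None})"
    unfolding cells_def by auto
  then have "card cells = c * (n * (4 * m))" by (simp add: row_count del: not_None_eq)
  then show ?thesis using card_group by simp
qed

lemma inj_on_cell_value: "inj_on (\<lambda>(t, i, j). the (diag_array t i j)) cells"
proof (rule eq_card_imp_inj_on)
  show "finite cells" unfolding cells_def
    by (rule finite_subset[of _ "{..<c} \<times> {..<n} \<times> {..<n}"]) auto
  have "(\<lambda>(t, i, j). the (diag_array t i j)) ` cells = UNIV"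
  proof (intro set_eqI iffI)
    fix g :: 'a
    obtain t i j where "t < c" "i < n" "j < n" "diag_array t i j = Some g" using exists_cell by blast
    then show "g \<in> (\<lambda>(t, i, j). the (diag_array t i j)) ` cells"
      unfolding cells_def by (intro image_eqI[of _ _ "(t, i, j)"]) auto
  qed simp
  then show "card ((\<lambda>(t, i, j). the (diag_array t i j)) ` cells) = card cells"
    by (simp add: card_cells)
qed

theorem diag_array_magic: "zero_sum_magic_set n (4 * m) c diag_array"
  unfolding zero_sum_magic_set_def
proof (intro conjI allI impI)
  fix g :: 'a
  obtain t i j where p: "t < c" "i < n" "j < n" "diag_array t i j = Some g" using exists_cell by blast
  show "\<exists>!p. case p of (t, i, j) \<Rightarrow> t < c \<and> i < n \<and> j < n \<and> diag_array t i j = Some g"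
  proof (rule ex1I[of _ "(t, i, j)"])
    fix q assume q: "case q of (t, i, j) \<Rightarrow> t < c \<and> i < n \<and> j < n \<and> diag_array t i j = Some g"
    then have "q \<in> cells" "(t, i, j) \<in> cells" using p unfolding cells_def by auto
    moreover have "(\<lambda>(t, i, j). the (diag_array t i j)) q = (\<lambda>(t, i, j). the (diag_array t i j)) (t, i, j)"
      using q p by (auto split: prod.splits)
    ultimately show "q = (t, i, j)" using inj_on_cell_value by (metis inj_onD)
  qed (use p in simp)
qed (rule row_count col_count row_sum col_sum)+

theorem diag_array_diagonal: "diagonal_set n (4 * m) c diag_array"
  unfolding diagonal_set_def using diag_array_k_diagonal by blast

end

lemma quad_cover_enumeration:
  fixes D P :: "'a::{ab_group_add,finite}"
  assumes "quad_cover D P X UNIV" "card (UNIV :: 'a set) = 4 * N"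
  obtains b where "\<And>g. \<exists>w<N. g \<in> set (quad D P (b w))"
proof -
  have X: "finite X" "card X \<le> N" "\<And>g. \<exists>x\<in>X. g \<in> set (quad D P x)"
    using assms by (auto simp: quad_cover_def)
  obtain b where b: "bij_betw b {0..<card X} X" using ex_bij_betw_nat_finite[OF X(1)] by blast
  have "\<exists>w<N. g \<in> set (quad D P (b w))" for g
  proof -
    obtain x where x: "x \<in> X" "g \<in> set (quad D P x)" using X(3) by blast
    then have "x \<in> b ` {0..<card X}" using b by (simp add: bij_betw_def)
    then obtain w where "w < card X" "x = b w" by auto
    then show ?thesis using X(2) x(2) by (intro exI[of _ w]) simp
  qed
  then show ?thesis by (rule that)
qed

theorem mainTheorem9:
  fixes n k c :: nat
  assumes "n \<ge> k" and "k \<ge> 4" and "k mod 4 = 0" and "c \<ge> 1"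
    and "in_class_G TYPE('a::{ab_group_add,finite})"
    and "card (UNIV :: 'a set) = n * k * c"
  shows "\<exists>A :: nat \<Rightarrow> nat \<Rightarrow> nat \<Rightarrow> 'a option.
           zero_sum_magic_set n k c A \<and> diagonal_set n k c A"
proof -
  obtain m where k: "k = 4 * m" using assms(3) by (metis mod_eq_0_iff_dvd dvdE)
  then have card: "card (UNIV :: 'a set) = 4 * (c * m * n)" using assms(6) by simp
  then obtain D P :: 'a and M where "quadruple_system D P M"
    using class_G_quadruple_system[OF assms(5)] by auto
  then obtain X where "quad_cover D P X UNIV" by (rule quadruple_system.quad_cover_UNIV[THEN exE])
  then obtain b where "\<And>g. \<exists>w<c * m * n. g \<in> set (quad D P (b w))"
    using card by (rule quad_cover_enumeration) blast
  then interpret diagonal_construction n m c D P b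
    using assms(1,6) k by unfold_locales auto
  show ?thesis using diag_array_magic diag_array_diagonal k by blast
qed

end
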